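(* Let $(\Omega,\mathcal{H},\mathbb{E})$ be a nonlinear expectation space and let $\{X_\alpha\}_{\alpha\in\mathcal{A}}$ be a family of $\mathbb{R}^d$-valued random variables on it (so $\varphi(X_\alpha)\in\mathcal{H}$ for $\varphi\in C_b(\mathbb{R}^d)$). Let $(\bar\Omega,\bar{\mathcal{H}},\bar{\mathbb{E}})$ be a sublinear expectation space, $l>0$ fixed, and $\bar X=(\bar X_1,\dots,\bar X_d)$ with $\bar X_i\in\bar{\mathcal{H}}$ and $\psi(\bar X)\in\bar{\mathcal{H}}$ for every Borel $\psi:\mathbb{R}^d\to\mathbb{R}$ with $|\psi(x)|\le c(1+|x|^l)$. Suppose \[ \mathbb{E}[\varphi(X_\alpha)]-\mathbb{E}[\psi(X_\alpha)]\le\bar{\mathbb{E}}[\varphi(\bar X)-\psi(\bar X)]\quad\text{for all }\alpha\in\mathcal{A},\ \varphi,\psi\in C_b(\mathbb{R}^d). \] Then the family of distributions $\{\mathbb{F}_{X_\alpha}\}_{\alpha\in\mathcal{A}}$, $\mathbb{F}_{X_\alpha}[\varphi]:=\mathbb{E}[\varphi(X_\alpha)]$ for $\varphi\in C_b(\mathbb{R}^d)$, is weakly compact: every sequence $\{\mathbb{F}_{X_{\alpha_n}}\}_{n\ge1}$ has a subsequence $\{\mathbb{F}_{X_{\alpha_{n_i}}}\}_{i\ge1}$ such that $\{\mathbb{F}_{X_{\alpha_{n_i}}}[\varphi]\}_{i\ge1}$ is Cauchy for every $\varphi\in C_b(\mathbb{R}^d)$.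
   Context: A nonlinear expectation space $(\Omega,\mathcal{H},\mathbb{E})$: $\mathcal{H}$ is a linear space of real functions on a set $\Omega$ with $1\in\mathcal{H}$ and $|\xi|\in\mathcal{H}$ for $\xi\in\mathcal{H}$; $\mathbb{E}:\mathcal{H}\to\mathbb{R}$ satisfies $\mathbb{E}[c]=c$ for constants and $\mathbb{E}[X]\ge\mathbb{E}[Y]$ when $X\ge Y$. A sublinear expectation space is such a space where moreover $\mathbb{E}[X+Y]\le\mathbb{E}[X]+\mathbb{E}[Y]$ and $\mathbb{E}[\lambda X]=\lambda\mathbb{E}[X]$ for $\lambda\ge0$. $C_b(\mathbb{R}^d)$ denotes bounded continuous real functions on $\mathbb{R}^d$. *)

theory Defs
  imports "HOL-Analysis.Analysis"
begin

text \<open>Omega is modelled as the (nonempty) universe of a type 'w; random variables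
  are real functions on it.  H is a set of such functions, E a functional on them.\<close>

definition nonlinear_expectation_space :: "('w \<Rightarrow> real) set \<Rightarrow> (('w \<Rightarrow> real) \<Rightarrow> real) \<Rightarrow> bool" where
  "nonlinear_expectation_space H E \<longleftrightarrow>
     (\<forall>X\<in>H. \<forall>Y\<in>H. (\<lambda>\<omega>. X \<omega> + Y \<omega>) \<in> H) \<and>
     (\<forall>X\<in>H. \<forall>a::real. (\<lambda>\<omega>. a * X \<omega>) \<in> H) \<and>
     (\<lambda>\<omega>. 1) \<in> H \<and>
     (\<forall>X\<in>H. (\<lambda>\<omega>. \<bar>X \<omega>\<bar>) \<in> H) \<and>
     (\<forall>c::real. E (\<lambda>\<omega>. c) = c) \<and>
     (\<forall>X\<in>H. \<forall>Y\<in>H. (\<forall>\<omega>. X \<omega> \<ge> Y \<omega>) \<longrightarrow> E X \<ge> E Y)"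

definition sublinear_expectation_space :: "('w \<Rightarrow> real) set \<Rightarrow> (('w \<Rightarrow> real) \<Rightarrow> real) \<Rightarrow> bool" where
  "sublinear_expectation_space H E \<longleftrightarrow>
     nonlinear_expectation_space H E \<and>
     (\<forall>X\<in>H. \<forall>Y\<in>H. E (\<lambda>\<omega>. X \<omega> + Y \<omega>) \<le> E X + E Y) \<and>
     (\<forall>X\<in>H. \<forall>t::real. t \<ge> 0 \<longrightarrow> E (\<lambda>\<omega>. t * X \<omega>) = t * E X)"

definition Cb :: "(real^'n \<Rightarrow> real) set" where
  "Cb = {\<phi>. continuous_on UNIV \<phi> \<and> bounded (range \<phi>)}"

end

theory Submission
  imports Defs "HOL-Library.Countable" "HOL-Library.Diagonal_Subsequence"
begin

text \<open>If \<open>\<phi>, \<psi> \<in> C\<^sub>b\<close> satisfy \<open>|\<phi> - \<psi>| \<le> \<epsilon> + c |x|\<^sup>l\<close>, the domination hypothesis and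
  sublinearity give \<open>|E[\<phi>(X \<alpha>)] - E[\<psi>(X \<alpha>)]| \<le> \<epsilon> + c Eb[|Xb|\<^sup>l]\<close> uniformly in \<open>\<alpha>\<close>.
  In this sense every \<open>\<phi> \<in> C\<^sub>b\<close> is approximated by a truncated polynomial with rational
  coefficients: uniformly on a large ball by Stone--Weierstrass, and outside the ball through
  the weight \<open>c |x|\<^sup>l\<close> with \<open>c\<close> small.  There are only countably many such functions and each
  is bounded, so a diagonal subsequence makes all their expectations converge, and the uniform
  approximation carries the Cauchy property over to every \<open>\<phi> \<in> C\<^sub>b\<close>.\<close>

text \<open>Polynomials with rational coefficients are represented as expression trees, which
  makes their countability immediate.\<close>

datatype 'n ratpoly =
  RConst rat | RVar 'n | RAdd "'n ratpoly" "'n ratpoly" | RMult "'n ratpoly" "'n ratpoly"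

instance ratpoly :: (countable) countable by countable_datatype

primrec ratpoly_eval :: "'n ratpoly \<Rightarrow> real^'n \<Rightarrow> real" where
  "ratpoly_eval (RConst q) x = of_rat q"
| "ratpoly_eval (RVar i) x = x $ i"
| "ratpoly_eval (RAdd p q) x = ratpoly_eval p x + ratpoly_eval q x"
| "ratpoly_eval (RMult p q) x = ratpoly_eval p x * ratpoly_eval q x"

lemma continuous_on_ratpoly_eval: "continuous_on S (ratpoly_eval p)"
  by (induction p) (auto intro!: continuous_intros)

lemma abs_mult_diff_le:
  fixes a a' b b' d A B :: real
  assumes "\<bar>a - a'\<bar> \<le> d" "\<bar>b - b'\<bar> \<le> d" "\<bar>a\<bar> \<le> A" "\<bar>b\<bar> \<le> B" "d \<le> 1"
  shows "\<bar>a * b - a' * b'\<bar> \<le> d * (A + B + 1)"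
proof -
  have "\<bar>b'\<bar> \<le> B + 1" using assms(2,4,5) by linarith
  have "a * b - a' * b' = a * (b - b') + (a - a') * b'" by (simp add: algebra_simps)
  also have "\<bar>\<dots>\<bar> \<le> \<bar>a\<bar> * \<bar>b - b'\<bar> + \<bar>a - a'\<bar> * \<bar>b'\<bar>"
    by (metis abs_mult abs_triangle_ineq)
  also have "\<dots> \<le> A * d + d * (B + 1)"
    using assms \<open>\<bar>b'\<bar> \<le> B + 1\<close> by (intro add_mono mult_mono) auto
  finally show ?thesis by (simp add: algebra_simps)
qed

text \<open>The uniform closure of the rational polynomials on \<open>S\<close>: a function ring to which
  Stone--Weierstrass applies.\<close>

definition ratpoly_approximable :: "(real^'n) set \<Rightarrow> (real^'n \<Rightarrow> real) set" where
  "ratpoly_approximable S =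
     {f. continuous_on S f \<and> (\<forall>e>0. \<exists>p. \<forall>x\<in>S. \<bar>f x - ratpoly_eval p x\<bar> \<le> e)}"

lemma ratpoly_approximable_continuous_on: "f \<in> ratpoly_approximable S \<Longrightarrow> continuous_on S f"
  by (simp add: ratpoly_approximable_def)

lemma ratpoly_approximable_ratpoly_eval: "ratpoly_eval p \<in> ratpoly_approximable S"
  unfolding ratpoly_approximable_def
  by (auto intro!: exI[of _ p] continuous_on_ratpoly_eval)

lemma ratpoly_approximable_const: "(\<lambda>_. c) \<in> ratpoly_approximable S"
  unfolding ratpoly_approximable_def
proof (intro CollectI conjI allI impI)
  fix e :: real assume "e > 0"
  then obtain r where "r \<in> \<rat>" "c - e < r" "r < c + e"
    using Rats_dense_in_real[of "c - e" "c + e"] by auto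
  then obtain q where "c - e < of_rat q" "of_rat q < c + e" by (auto elim!: Rats_cases)
  then show "\<exists>p. \<forall>x\<in>S. \<bar>c - ratpoly_eval p x\<bar> \<le> e"
    by (intro exI[of _ "RConst q"]) auto
qed simp

lemma ratpoly_approximable_add:
  assumes "f \<in> ratpoly_approximable S" "g \<in> ratpoly_approximable S"
  shows "(\<lambda>x. f x + g x) \<in> ratpoly_approximable S"
  unfolding ratpoly_approximable_def
proof (intro CollectI conjI allI impI)
  show "continuous_on S (\<lambda>x. f x + g x)"
    using assms by (auto simp: ratpoly_approximable_def intro!: continuous_intros)
  fix e :: real assume "e > 0"
  then have "e/2 > 0" by simp
  then obtain p q where p: "\<forall>x\<in>S. \<bar>f x - ratpoly_eval p x\<bar> \<le> e/2"
    and q: "\<forall>x\<in>S. \<bar>g x - ratpoly_eval q x\<bar> \<le> e/2"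
    using assms unfolding ratpoly_approximable_def by blast
  have "\<bar>f x + g x - ratpoly_eval (RAdd p q) x\<bar> \<le> e" if "x \<in> S" for x
    using p[rule_format, OF that] q[rule_format, OF that] unfolding ratpoly_eval.simps by arith
  then show "\<exists>p. \<forall>x\<in>S. \<bar>f x + g x - ratpoly_eval p x\<bar> \<le> e" by blast
qed

lemma ratpoly_approximable_mult:
  assumes "compact S" "f \<in> ratpoly_approximable S" "g \<in> ratpoly_approximable S"
  shows "(\<lambda>x. f x * g x) \<in> ratpoly_approximable S"
  unfolding ratpoly_approximable_def
proof (intro CollectI conjI allI impI)
  have "continuous_on S f" "continuous_on S g"
    using assms(2,3) by (auto simp: ratpoly_approximable_def)
  then show "continuous_on S (\<lambda>x. f x * g x)" by (intro continuous_intros)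
  have "bounded (f ` S)" "bounded (g ` S)"
    using \<open>continuous_on S f\<close> \<open>continuous_on S g\<close> assms(1)
    by (auto intro: compact_imp_bounded compact_continuous_image)
  then obtain A B where A: "\<forall>x\<in>S. \<bar>f x\<bar> \<le> A" and B: "\<forall>x\<in>S. \<bar>g x\<bar> \<le> B"
    unfolding bounded_iff by auto
  fix e :: real assume "e > 0"
  define d where "d = min 1 (e / (\<bar>A\<bar> + \<bar>B\<bar> + 1))"
  have "d > 0" "d \<le> 1" using \<open>e > 0\<close> by (auto simp: d_def)
  have "d \<le> e / (\<bar>A\<bar> + \<bar>B\<bar> + 1)" by (simp add: d_def)
  then have "d * (\<bar>A\<bar> + \<bar>B\<bar> + 1) \<le> e" by (simp add: pos_le_divide_eq add_pos_nonneg)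
  obtain p where p: "\<forall>x\<in>S. \<bar>f x - ratpoly_eval p x\<bar> \<le> d"
    using assms(2) \<open>d > 0\<close> unfolding ratpoly_approximable_def by blast
  obtain q where q: "\<forall>x\<in>S. \<bar>g x - ratpoly_eval q x\<bar> \<le> d"
    using assms(3) \<open>d > 0\<close> unfolding ratpoly_approximable_def by blast
  have "\<bar>f x * g x - ratpoly_eval (RMult p q) x\<bar> \<le> e" if "x \<in> S" for x
    using abs_mult_diff_le[OF p[rule_format, OF that] q[rule_format, OF that], of "\<bar>A\<bar>" "\<bar>B\<bar>"]
      A[rule_format, OF that] B[rule_format, OF that] \<open>d \<le> 1\<close> \<open>d * (\<bar>A\<bar> + \<bar>B\<bar> + 1) \<le> e\<close>
    by simp
  then show "\<exists>p. \<forall>x\<in>S. \<bar>f x * g x - ratpoly_eval p x\<bar> \<le> e" by blast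
qed

lemma function_ring_on_ratpoly_approximable:
  fixes S :: "(real^'n) set"
  assumes "compact S"
  shows "function_ring_on (ratpoly_approximable S) S"
proof
  fix x y :: "real^'n" assume "x \<noteq> y"
  then obtain i where "x $ i \<noteq> y $ i" by (auto simp: vec_eq_iff)
  then show "\<exists>f\<in>ratpoly_approximable S. f x \<noteq> f y"
    using ratpoly_approximable_ratpoly_eval[of "RVar i" S] by (intro bexI) auto
qed (auto simp: assms intro: ratpoly_approximable_continuous_on ratpoly_approximable_const
      ratpoly_approximable_add ratpoly_approximable_mult[OF assms])

lemma ratpoly_uniform_approx:
  fixes f :: "real^'n \<Rightarrow> real"
  assumes "compact S" "continuous_on S f" "e > 0"
  obtains p where "\<forall>x\<in>S. \<bar>f x - ratpoly_eval p x\<bar> \<le> e"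
proof -
  interpret function_ring_on "ratpoly_approximable S" S
    by (rule function_ring_on_ratpoly_approximable[OF assms(1)])
  obtain g where g: "g \<in> ratpoly_approximable S" "\<forall>x\<in>S. \<bar>f x - g x\<bar> < e/2"
    using Stone_Weierstrass_basic[OF assms(2), of "e/2"] assms(3) by auto
  moreover have "e/2 > 0" using assms(3) by simp
  ultimately obtain p where p: "\<forall>x\<in>S. \<bar>g x - ratpoly_eval p x\<bar> \<le> e/2"
    unfolding ratpoly_approximable_def by blast
  have "\<bar>f x - ratpoly_eval p x\<bar> \<le> e" if "x \<in> S" for x
    using g(2)[rule_format, OF that] p[rule_format, OF that] by arith
  then show thesis by (intro that) blast
qed

definition clamped_ratpoly :: "'n ratpoly \<times> nat \<Rightarrow> real^'n \<Rightarrow> real" where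
  "clamped_ratpoly = (\<lambda>(p, m) x. max (- real m) (min (real m) (ratpoly_eval p x)))"

lemma clamped_ratpoly_in_Cb: "clamped_ratpoly pm \<in> Cb"
proof (cases pm)
  case (Pair p m)
  have "continuous_on UNIV (clamped_ratpoly pm)"
    unfolding Pair clamped_ratpoly_def by (auto intro!: continuous_intros continuous_on_ratpoly_eval)
  moreover have "bounded (range (clamped_ratpoly pm))"
    unfolding Pair clamped_ratpoly_def bounded_iff by (intro exI[of _ "real m"]) auto
  ultimately show ?thesis by (simp add: Cb_def)
qed

lemma Cb_weighted_approx:
  fixes \<phi> :: "real^'n \<Rightarrow> real"
  assumes "\<phi> \<in> Cb" "l > 0" "e > 0"
  obtains pm c where "c \<ge> 0" "c * K \<le> e"
    "\<forall>x. \<bar>\<phi> x - clamped_ratpoly pm x\<bar> \<le> e + c * norm x powr l"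
proof -
  obtain B where B: "\<forall>x. \<bar>\<phi> x\<bar> \<le> B"
    using assms(1) unfolding Cb_def bounded_iff by auto
  obtain m :: nat where "B \<le> real m" using real_arch_simple by blast
  with B have m: "\<forall>x. \<bar>\<phi> x\<bar> \<le> real m" by (meson order_trans)
  \<comment> \<open>Outside the ball of radius \<open>N = T\<^bsup>1/l\<^esup>\<close> the error \<open>\<le> 2m\<close> is absorbed by \<open>c |x|\<^sup>l\<close>
     with \<open>c = 2m/T\<close>; \<open>T\<close> is large enough to make \<open>c |K| \<le> e\<close>.\<close>
  define T where "T = 2 * real m * \<bar>K\<bar> / e + 1"
  have "T \<ge> 1" using assms by (simp add: T_def)
  define c where "c = 2 * real m / T"
  have "c \<ge> 0" using \<open>T \<ge> 1\<close> by (simp add: c_def)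
  have "2 * real m * \<bar>K\<bar> \<le> e * T" using assms by (simp add: T_def field_simps)
  then have "c * \<bar>K\<bar> \<le> e" using \<open>T \<ge> 1\<close> by (simp add: c_def field_simps)
  then have "c * K \<le> e" using \<open>c \<ge> 0\<close> by (smt (verit) abs_ge_self mult_left_mono)
  define N where "N = T powr (1/l)"
  have "N powr l = T" using \<open>T \<ge> 1\<close> assms(2) by (simp add: N_def powr_powr)
  have "continuous_on (cball 0 N) \<phi>"
    using assms(1) by (auto simp: Cb_def intro: continuous_on_subset)
  then obtain p where p: "\<forall>x\<in>cball 0 N. \<bar>\<phi> x - ratpoly_eval p x\<bar> \<le> e"
    using ratpoly_uniform_approx[OF compact_cball _ assms(3)] by blast
  have "\<bar>\<phi> x - clamped_ratpoly (p, m) x\<bar> \<le> e + c * norm x powr l" for x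
  proof (cases "norm x \<le> N")
    case True
    \<comment> \<open>inside the ball, truncation at the level \<open>m \<ge> |\<phi>|\<close> does not increase the error\<close>
    then have "\<bar>\<phi> x - ratpoly_eval p x\<bar> \<le> e" using p by simp
    moreover have "c * norm x powr l \<ge> 0" using \<open>c \<ge> 0\<close> by simp
    ultimately show ?thesis
      using m[rule_format, of x] unfolding clamped_ratpoly_def by (simp; arith)
  next
    case False
    then have "T \<le> norm x powr l"
      using \<open>N powr l = T\<close> assms(2) \<open>T \<ge> 1\<close> powr_mono2[of l N "norm x"] by (simp add: N_def)
    moreover have "c * T = 2 * real m" using \<open>T \<ge> 1\<close> by (simp add: c_def)
    ultimately have "2 * real m \<le> c * norm x powr l"
      using mult_left_mono[of T "norm x powr l" c] \<open>c \<ge> 0\<close> by simp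
    then show ?thesis
      using m[rule_format, of x] assms(3) unfolding clamped_ratpoly_def by (simp; arith)
  qed
  then show thesis using that \<open>c \<ge> 0\<close> \<open>c * K \<le> e\<close> by blast
qed

lemma nonlinear_expectation_space_const:
  assumes "nonlinear_expectation_space H E"
  shows "(\<lambda>_. c) \<in> H"
proof -
  have "\<forall>X\<in>H. \<forall>a. (\<lambda>\<omega>. a * X \<omega>) \<in> H" "(\<lambda>_. 1) \<in> H"
    using assms by (simp_all add: nonlinear_expectation_space_def)
  from this(1)[rule_format, OF this(2), of c] show ?thesis by simp
qed

lemma nonlinear_expectation_mono:
  assumes "nonlinear_expectation_space H E" "Y \<in> H" "Z \<in> H" "\<And>\<omega>. Y \<omega> \<le> Z \<omega>"
  shows "E Y \<le> E Z"
  using assms by (simp add: nonlinear_expectation_space_def)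

lemma nonlinear_expectation_abs_le:
  assumes "nonlinear_expectation_space H E" "Y \<in> H" "\<And>\<omega>. \<bar>Y \<omega>\<bar> \<le> b"
  shows "\<bar>E Y\<bar> \<le> b"
proof -
  have "E (\<lambda>_. - b) \<le> E Y"
    by (rule nonlinear_expectation_mono[OF assms(1) nonlinear_expectation_space_const[OF assms(1)]
          assms(2)]) (meson abs_le_D2 assms(3) minus_le_iff)
  moreover have "E Y \<le> E (\<lambda>_. b)"
    by (rule nonlinear_expectation_mono[OF assms(1) assms(2) nonlinear_expectation_space_const[OF assms(1)]])
      (meson abs_le_D1 assms(3))
  moreover have "E (\<lambda>_. c) = c" for c
    using assms(1) by (simp add: nonlinear_expectation_space_def)
  ultimately show ?thesis by (simp add: abs_le_iff)
qed

lemma sublinear_expectation_le_affine: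
  assumes "sublinear_expectation_space H E" "Z \<in> H" "Y \<in> H" "c \<ge> 0"
    "\<And>\<omega>. Z \<omega> \<le> \<epsilon> + c * Y \<omega>"
  shows "E Z \<le> \<epsilon> + c * E Y"
proof -
  have H: "nonlinear_expectation_space H E"
    and sub: "\<forall>X\<in>H. \<forall>Y\<in>H. E (\<lambda>\<omega>. X \<omega> + Y \<omega>) \<le> E X + E Y"
    and hom: "\<forall>X\<in>H. \<forall>t. t \<ge> 0 \<longrightarrow> E (\<lambda>\<omega>. t * X \<omega>) = t * E X"
    using assms(1) by (simp_all add: sublinear_expectation_space_def)
  have add: "\<forall>X\<in>H. \<forall>Y\<in>H. (\<lambda>\<omega>. X \<omega> + Y \<omega>) \<in> H"
    and smult: "\<forall>X\<in>H. \<forall>a. (\<lambda>\<omega>. a * X \<omega>) \<in> H"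
    and const: "E (\<lambda>_. \<epsilon>) = \<epsilon>"
    using H by (simp_all add: nonlinear_expectation_space_def)
  have cY: "(\<lambda>\<omega>. c * Y \<omega>) \<in> H" using smult assms(3) by blast
  have \<epsilon>: "(\<lambda>_. \<epsilon>) \<in> H" by (rule nonlinear_expectation_space_const[OF H])
  have "E Z \<le> E (\<lambda>\<omega>. \<epsilon> + c * Y \<omega>)"
    using nonlinear_expectation_mono[OF H assms(2) add[rule_format, OF \<epsilon> cY]] assms(5) by simp
  also have "\<dots> \<le> E (\<lambda>_. \<epsilon>) + E (\<lambda>\<omega>. c * Y \<omega>)"
    using sub[rule_format, OF \<epsilon> cY] by simp
  also have "\<dots> = \<epsilon> + c * E Y"
    using const hom[rule_format, OF assms(3,4)] by simp
  finally show ?thesis .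
qed

lemma expectation_diff_le_weighted:
  fixes F :: "(real^'n \<Rightarrow> real) \<Rightarrow> real" and Xb :: "'v \<Rightarrow> real^'n"
  assumes "sublinear_expectation_space Hb Eb"
    and growth: "\<And>\<psi> c. \<psi> \<in> borel_measurable borel \<Longrightarrow>
           (\<forall>x. \<bar>\<psi> x\<bar> \<le> c * (1 + norm x powr l)) \<Longrightarrow> (\<lambda>\<omega>. \<psi> (Xb \<omega>)) \<in> Hb"
    and dominated: "\<And>\<phi> \<psi>. \<phi> \<in> Cb \<Longrightarrow> \<psi> \<in> Cb \<Longrightarrow> F \<phi> - F \<psi> \<le> Eb (\<lambda>\<omega>. \<phi> (Xb \<omega>) - \<psi> (Xb \<omega>))"
    and "\<phi> \<in> Cb" "\<psi> \<in> Cb" "c \<ge> 0" "\<forall>x. \<bar>\<phi> x - \<psi> x\<bar> \<le> \<epsilon> + c * norm x powr l"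
  shows "\<bar>F \<phi> - F \<psi>\<bar> \<le> \<epsilon> + c * Eb (\<lambda>\<omega>. norm (Xb \<omega>) powr l)"
proof -
  have weight: "(\<lambda>\<omega>. norm (Xb \<omega>) powr l) \<in> Hb"
    using growth[of "\<lambda>x. norm x powr l" 1] by simp
  have "F \<phi>' - F \<psi>' \<le> \<epsilon> + c * Eb (\<lambda>\<omega>. norm (Xb \<omega>) powr l)"
    if Cb: "\<phi>' \<in> Cb" "\<psi>' \<in> Cb" and close: "\<forall>x. \<bar>\<phi>' x - \<psi>' x\<bar> \<le> \<epsilon> + c * norm x powr l"
    for \<phi>' \<psi>'
  proof -
    obtain B1 B2 where B1: "\<forall>x. \<bar>\<phi>' x\<bar> \<le> B1" and B2: "\<forall>x. \<bar>\<psi>' x\<bar> \<le> B2"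
      using Cb unfolding Cb_def bounded_iff by auto
    have "\<bar>\<phi>' x - \<psi>' x\<bar> \<le> (B1 + B2) * (1 + norm x powr l)" for x
    proof -
      have "\<bar>\<phi>' x - \<psi>' x\<bar> \<le> B1 + B2" "0 \<le> B1 + B2"
        using B1[rule_format, of x] B2[rule_format, of x] by arith+
      moreover have "0 \<le> (B1 + B2) * norm x powr l" using \<open>0 \<le> B1 + B2\<close> by simp
      ultimately show ?thesis unfolding distrib_left mult_1_right by linarith
    qed
    moreover have "(\<lambda>x. \<phi>' x - \<psi>' x) \<in> borel_measurable borel"
      using Cb unfolding Cb_def by (intro borel_measurable_continuous_onI continuous_intros) auto
    ultimately have "(\<lambda>\<omega>. \<phi>' (Xb \<omega>) - \<psi>' (Xb \<omega>)) \<in> Hb"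
      using growth[of "\<lambda>x. \<phi>' x - \<psi>' x" "B1 + B2"] by simp
    then have "Eb (\<lambda>\<omega>. \<phi>' (Xb \<omega>) - \<psi>' (Xb \<omega>)) \<le> \<epsilon> + c * Eb (\<lambda>\<omega>. norm (Xb \<omega>) powr l)"
      using close by (intro sublinear_expectation_le_affine[OF assms(1) _ weight \<open>c \<ge> 0\<close>])
        (auto dest: abs_le_D1)
    with dominated[OF Cb] show ?thesis by linarith
  qed
  from this[of \<phi> \<psi>] this[of \<psi> \<phi>] assms(4-7) show ?thesis
    by (simp add: abs_minus_commute abs_le_iff)
qed

lemma bounded_range_expectation_Cb:
  assumes "nonlinear_expectation_space H E" "\<phi> \<in> Cb" "\<And>k. (\<lambda>\<omega>. \<phi> (Y k \<omega>)) \<in> H"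
  shows "bounded (range (\<lambda>k. E (\<lambda>\<omega>. \<phi> (Y k \<omega>))))"
proof -
  obtain B where "\<forall>x. \<bar>\<phi> x\<bar> \<le> B"
    using assms(2) unfolding Cb_def bounded_iff by auto
  then have "\<bar>E (\<lambda>\<omega>. \<phi> (Y k \<omega>))\<bar> \<le> B" for k
    by (intro nonlinear_expectation_abs_le[OF assms(1,3)]) simp
  then show ?thesis unfolding bounded_iff by auto
qed

lemma bounded_seqs_diagonal_convergent:
  fixes u :: "nat \<Rightarrow> nat \<Rightarrow> 'a::heine_borel"
  assumes "\<And>j. bounded (range (u j))"
  obtains r where "strict_mono r" "\<And>j. convergent (\<lambda>k. u j (r k))"
proof -
  interpret subseqs "\<lambda>j s. convergent (u j \<circ> s)"
  proof
    fix j and s :: "nat \<Rightarrow> nat"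
    have "bounded (range (u j \<circ> s))"
      using assms[of j] by (rule bounded_subset) auto
    then show "\<exists>r'. strict_mono r' \<and> convergent (u j \<circ> (s \<circ> r'))"
      by (metis bounded_imp_convergent_subsequence convergent_def comp_assoc)
  qed
  have "convergent (u j \<circ> diagseq)" for j
  proof -
    have "convergent (u j \<circ> (diagseq \<circ> (+) (Suc j)))"
      by (rule diagseq_holds) (metis convergent_def LIMSEQ_subseq_LIMSEQ comp_assoc)
    then obtain L where "(\<lambda>k. u j (diagseq (k + Suc j))) \<longlonglongrightarrow> L"
      by (auto simp: convergent_def o_def add.commute)
    then have "(\<lambda>k. u j (diagseq k)) \<longlonglongrightarrow> L" by (rule LIMSEQ_offset)
    then show ?thesis by (auto simp: convergent_def o_def)
  qed
  then show thesis using subseq_diagseq by (intro that) (auto simp: o_def)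
qed

lemma Cauchy_if_uniformly_approximable:
  fixes f :: "nat \<Rightarrow> 'a::metric_space"
  assumes "\<And>e. e > 0 \<Longrightarrow> \<exists>g. Cauchy g \<and> (\<forall>k. dist (f k) (g k) \<le> e)"
  shows "Cauchy f"
proof (rule metric_CauchyI)
  fix e :: real assume "e > 0"
  then obtain g where "Cauchy g" and g: "\<forall>k. dist (f k) (g k) \<le> e/3"
    using assms[of "e/3"] by auto
  then obtain M where M: "\<forall>m\<ge>M. \<forall>n\<ge>M. dist (g m) (g n) < e/3"
    using \<open>e > 0\<close> by (meson Cauchy_def divide_pos_pos zero_less_numeral)
  have "dist (f m) (f n) < e" if "m \<ge> M" "n \<ge> M" for m n
    using dist_triangle[of "f m" "f n" "g m"] dist_triangle[of "g m" "f n" "g n"]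
      M[rule_format, OF that] g[rule_format, of m] g[rule_format, of n] by (simp add: dist_commute)
  then show "\<exists>M. \<forall>m\<ge>M. \<forall>n\<ge>M. dist (f m) (f n) < e" by blast
qed

lemma dominated_functional_approx_clamped_ratpoly:
  fixes F :: "'i \<Rightarrow> (real^'n \<Rightarrow> real) \<Rightarrow> real" and Xb :: "'v \<Rightarrow> real^'n"
  assumes "sublinear_expectation_space Hb Eb" "l > 0"
    and growth: "\<And>\<psi> c. \<psi> \<in> borel_measurable borel \<Longrightarrow>
           (\<forall>x. \<bar>\<psi> x\<bar> \<le> c * (1 + norm x powr l)) \<Longrightarrow> (\<lambda>\<omega>. \<psi> (Xb \<omega>)) \<in> Hb"
    and dominated: "\<And>\<alpha> \<phi> \<psi>. \<phi> \<in> Cb \<Longrightarrow> \<psi> \<in> Cb \<Longrightarrow>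
           F \<alpha> \<phi> - F \<alpha> \<psi> \<le> Eb (\<lambda>\<omega>. \<phi> (Xb \<omega>) - \<psi> (Xb \<omega>))"
    and "\<phi> \<in> Cb" "e > 0"
  obtains pm where "\<forall>\<alpha>. \<bar>F \<alpha> \<phi> - F \<alpha> (clamped_ratpoly pm)\<bar> \<le> e"
proof -
  obtain pm c where c: "c \<ge> 0" "c * Eb (\<lambda>\<omega>. norm (Xb \<omega>) powr l) \<le> e/2"
    and close: "\<forall>x. \<bar>\<phi> x - clamped_ratpoly pm x\<bar> \<le> e/2 + c * norm x powr l"
    by (rule Cb_weighted_approx[OF \<open>\<phi> \<in> Cb\<close> \<open>l > 0\<close> half_gt_zero[OF \<open>e > 0\<close>]])
  have diff: "\<bar>F \<alpha> \<phi> - F \<alpha> (clamped_ratpoly pm)\<bar> \<le> e/2 + c * Eb (\<lambda>\<omega>. norm (Xb \<omega>) powr l)" for \<alpha>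
    by (rule expectation_diff_le_weighted[where F = "F \<alpha>", OF assms(1) growth dominated
          \<open>\<phi> \<in> Cb\<close> clamped_ratpoly_in_Cb c(1) close])
  have "\<bar>F \<alpha> \<phi> - F \<alpha> (clamped_ratpoly pm)\<bar> \<le> e" for \<alpha>
    using diff[of \<alpha>] c(2) by linarith
  then show thesis by (intro that) blast
qed

theorem mainTheorem2:
  fixes H :: "('w \<Rightarrow> real) set" and E :: "('w \<Rightarrow> real) \<Rightarrow> real"
    and X :: "'i \<Rightarrow> 'w \<Rightarrow> real^'n"
    and Hb :: "('v \<Rightarrow> real) set" and Eb :: "('v \<Rightarrow> real) \<Rightarrow> real"
    and Xb :: "'v \<Rightarrow> real^'n"
    and l :: real
  assumes "nonlinear_expectation_space H E"
    and "\<And>\<alpha> \<phi>. \<phi> \<in> Cb \<Longrightarrow> (\<lambda>\<omega>. \<phi> (X \<alpha> \<omega>)) \<in> H"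
    and "sublinear_expectation_space Hb Eb"
    and "l > 0"
    and "\<And>i. (\<lambda>\<omega>. Xb \<omega> $ i) \<in> Hb"
    and "\<And>\<psi> c. \<psi> \<in> borel_measurable borel \<Longrightarrow>
           (\<forall>x. \<bar>\<psi> x\<bar> \<le> c * (1 + norm x powr l)) \<Longrightarrow> (\<lambda>\<omega>. \<psi> (Xb \<omega>)) \<in> Hb"
    and "\<And>\<alpha> \<phi> \<psi>. \<phi> \<in> Cb \<Longrightarrow> \<psi> \<in> Cb \<Longrightarrow>
           E (\<lambda>\<omega>. \<phi> (X \<alpha> \<omega>)) - E (\<lambda>\<omega>. \<psi> (X \<alpha> \<omega>))
             \<le> Eb (\<lambda>\<omega>. \<phi> (Xb \<omega>) - \<psi> (Xb \<omega>))"
  shows "\<forall>a :: nat \<Rightarrow> 'i. \<exists>r :: nat \<Rightarrow> nat. strict_mono r \<and>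
           (\<forall>\<phi>\<in>Cb. Cauchy (\<lambda>k. E (\<lambda>\<omega>. \<phi> (X (a (r k)) \<omega>))))"
proof
  fix a :: "nat \<Rightarrow> 'i"
  define d :: "nat \<Rightarrow> real^'n \<Rightarrow> real" where "d j = clamped_ratpoly (from_nat j)" for j
  have bounded: "bounded (range (\<lambda>k. E (\<lambda>\<omega>. d j (X (a k) \<omega>))))" for j
    unfolding d_def
    by (rule bounded_range_expectation_Cb[OF assms(1) clamped_ratpoly_in_Cb assms(2)[OF clamped_ratpoly_in_Cb]])
  obtain r where "strict_mono r"
    and convergent: "\<And>j. convergent (\<lambda>k. E (\<lambda>\<omega>. d j (X (a (r k)) \<omega>)))"
    using bounded_seqs_diagonal_convergent[of "\<lambda>j k. E (\<lambda>\<omega>. d j (X (a k) \<omega>))", OF bounded] by blast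
  have "Cauchy (\<lambda>k. E (\<lambda>\<omega>. \<phi> (X (a (r k)) \<omega>)))" if "\<phi> \<in> Cb" for \<phi>
  proof (rule Cauchy_if_uniformly_approximable)
    fix e :: real assume "e > 0"
    obtain pm where pm: "\<forall>\<alpha>. \<bar>E (\<lambda>\<omega>. \<phi> (X \<alpha> \<omega>)) - E (\<lambda>\<omega>. clamped_ratpoly pm (X \<alpha> \<omega>))\<bar> \<le> e"
      by (rule dominated_functional_approx_clamped_ratpoly[where F = "\<lambda>\<alpha> \<phi>. E (\<lambda>\<omega>. \<phi> (X \<alpha> \<omega>))",
            OF assms(3,4,6,7) \<open>\<phi> \<in> Cb\<close> \<open>e > 0\<close>])
    moreover have "d (to_nat pm) = clamped_ratpoly pm" by (simp add: d_def)
    ultimately show "\<exists>g. Cauchy g \<and> (\<forall>k. dist (E (\<lambda>\<omega>. \<phi> (X (a (r k)) \<omega>))) (g k) \<le> e)"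
      using convergent_Cauchy[OF convergent[of "to_nat pm"]] by (auto simp: dist_real_def)
  qed
  with \<open>strict_mono r\<close> show "\<exists>r. strict_mono r \<and> (\<forall>\<phi>\<in>Cb. Cauchy (\<lambda>k. E (\<lambda>\<omega>. \<phi> (X (a (r k)) \<omega>))))"
    by blast
qed

end
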